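(* Let $(\Omega,\mathcal A',\mathbb Q)$ be a probability space carrying a real random variable $Y$, and let $\mathcal A\subseteq\mathcal A'$ be a sub-$\sigma$-field. Let $F$ be a CDF-valued random quantity that is ideal relative to $\mathcal A$, i.e. $F$ is a regular version of the conditional distribution of $Y$ given $\mathcal A$. Let $\alpha\in(0,1)$, let $Q$ be an $\mathcal A$-measurable random variable such that $Q(\omega)$ is an $\alpha$-quantile of $F(\omega)$ for almost every $\omega$, and let $X_1,X_2$ be $\mathcal A$-measurable real random variables such that almost surely either $X_2\le X_1\le Q$ or $Q\le X_1\le X_2$. Then $X_1$ dominates $X_2$ as an $\alpha$-quantile forecast: $\mathbb E_{\mathbb Q}\,\mathrm S(X_1,Y)\le\mathbb E_{\mathbb Q}\,\mathrm S(X_2,Y)$ for every $\mathrm S\in\mathcal S^{\rm Q}_\alpha$. Analogously, if $\mathbb E_{\mathbb Q}|Y|<\infty$, $T$ is the ($\mathcal A$-measurable) $\alpha$-expectile of $F$, and almost surely either $X_2\le X_1\le T$ or $T\le X_1\le X_2$, then $\mathbb E_{\mathbb Q}\,\mathrm S(X_1,Y)\le\mathbb E_{\mathbb Q}\,\mathrm S(X_2,Y)$ for every $\mathrm S\in\mathcal S^{\rm E}_\alpha$.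
   Context: For a CDF $G$, its $\alpha$-quantiles are the points of $[\sup\{s:G(s)<\alpha\},\sup\{s:G(s)\le\alpha\}]$; for $G$ with finite first moment, its $\alpha$-expectile is the unique $t$ with $(1-\alpha)\int_{-\infty}^t(t-y)\,\mathrm dG(y)=\alpha\int_t^\infty(y-t)\,\mathrm dG(y)$. $\mathcal S^{\rm Q}_\alpha$ is the class of scoring functions $\mathrm S(x,y)=(\mathbb 1(y<x)-\alpha)(g(x)-g(y))$ with $g:\mathbb R\to\mathbb R$ left-continuous non-decreasing; $\mathcal S^{\rm E}_\alpha$ is the class of scoring functions $\mathrm S(x,y)=|\mathbb 1(y<x)-\alpha|\,(\phi(y)-\phi(x)-\phi'(x)(y-x))$ with $\phi$ convex and $\phi'$ its left-hand derivative. Expectations of these nonnegative functions take values in $[0,\infty]$. *)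

theory Defs
  imports "HOL-Probability.Probability"
begin

definition is_CDF :: "(real \<Rightarrow> real) \<Rightarrow> bool" where
  "is_CDF G \<longleftrightarrow> mono G \<and> (\<forall>x. continuous (at_right x) G)
     \<and> (G \<longlongrightarrow> 0) at_bot \<and> (G \<longlongrightarrow> 1) at_top"

abbreviation cdf_measure :: "(real \<Rightarrow> real) \<Rightarrow> real measure" where
  "cdf_measure G \<equiv> interval_measure G"

definition is_quantile :: "real \<Rightarrow> (real \<Rightarrow> real) \<Rightarrow> real \<Rightarrow> bool" where
  "is_quantile \<alpha> G q \<longleftrightarrow> Sup {s. G s < \<alpha>} \<le> q \<and> q \<le> Sup {s. G s \<le> \<alpha>}"

definition is_expectile :: "real \<Rightarrow> (real \<Rightarrow> real) \<Rightarrow> real \<Rightarrow> bool" where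
  "is_expectile \<alpha> G t \<longleftrightarrow> integrable (cdf_measure G) (\<lambda>y. y) \<and>
     (1 - \<alpha>) * (LINT y:{..t}|cdf_measure G. t - y) = \<alpha> * (LINT y:{t<..}|cdf_measure G. y - t)"

text \<open>F is a regular version of the conditional distribution of Y given the sub-sigma-field A.\<close>
definition ideal_forecast :: "'a measure \<Rightarrow> 'a measure \<Rightarrow> ('a \<Rightarrow> real) \<Rightarrow> ('a \<Rightarrow> real \<Rightarrow> real) \<Rightarrow> bool" where
  "ideal_forecast M A Y F \<longleftrightarrow>
     (\<forall>\<omega>\<in>space M. is_CDF (F \<omega>)) \<and>
     (\<forall>t. (\<lambda>\<omega>. F \<omega> t) \<in> borel_measurable A) \<and>
     (\<forall>B\<in>sets A. \<forall>t. measure M (B \<inter> {\<omega>\<in>space M. Y \<omega> \<le> t}) = (LINT \<omega>:B|M. F \<omega> t))"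

definition scoresQ :: "real \<Rightarrow> (real \<Rightarrow> real \<Rightarrow> real) \<Rightarrow> bool" where
  "scoresQ \<alpha> S \<longleftrightarrow> (\<exists>g::real \<Rightarrow> real. mono g \<and> (\<forall>x. continuous (at_left x) g) \<and>
     S = (\<lambda>x y. ((if y < x then 1 else 0) - \<alpha>) * (g x - g y)))"

definition left_deriv :: "(real \<Rightarrow> real) \<Rightarrow> real \<Rightarrow> real" where
  "left_deriv \<phi> x = Lim (at_left x) (\<lambda>z. (\<phi> z - \<phi> x) / (z - x))"

definition scoresE :: "real \<Rightarrow> (real \<Rightarrow> real \<Rightarrow> real) \<Rightarrow> bool" where
  "scoresE \<alpha> S \<longleftrightarrow> (\<exists>\<phi>::real \<Rightarrow> real. convex_on UNIV \<phi> \<and>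
     S = (\<lambda>x y. \<bar>(if y < x then 1 else 0) - \<alpha>\<bar> * (\<phi> y - \<phi> x - left_deriv \<phi> x * (y - x))))"

end

theory Submission
  imports Defs
begin

(* For an A-measurable point forecast X, the ideal forecast disintegrates the joint law of (X, Y),
   so E S(X, Y) is the expectation over w of the integral of S(X w, y) against F w.  It therefore
   suffices to compare the scores of two points x1, x2 under one CDF G with alpha-quantile
   (alpha-expectile) q, where x1 lies between x2 and q.  Pointwise in y, S(x1, y) plus one
   compensator is at most S(x2, y) plus another.  For quantile scores the compensators are
   alpha (g x1 - g x2) and 1{y < x1} (g x1 - g x2), whose G-means compare because G(x1-) <= alpha
   below the quantile; for expectile scores they are multiples of the partial moments (y - x1)+
   and (x1 - y)+, which compare by the balance equation defining the expectile.  Since the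
   compensators are integrable they cancel, even when the scores themselves are not integrable. *)

lemma nn_integral_mono_compensated:
  fixes f g h k :: "'a \<Rightarrow> real"
  assumes [measurable]: "f \<in> borel_measurable M" "g \<in> borel_measurable M"
    and nonneg: "\<And>y. 0 \<le> f y" "\<And>y. 0 \<le> g y" "\<And>y. 0 \<le> h y" "\<And>y. 0 \<le> k y"
    and integrable: "integrable M h" "integrable M k"
    and "integral\<^sup>L M k \<le> integral\<^sup>L M h"
    and "\<And>y. y \<in> space M \<Longrightarrow> f y + h y \<le> g y + k y"
  shows "(\<integral>\<^sup>+y. f y \<partial>M) \<le> (\<integral>\<^sup>+y. g y \<partial>M)"
proof -
  have [measurable]: "h \<in> borel_measurable M" "k \<in> borel_measurable M"
    using integrable by auto
  have nn_integral_plus: "(\<integral>\<^sup>+y. u y + v y \<partial>M) = (\<integral>\<^sup>+y. u y \<partial>M) + integral\<^sup>L M v"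
    if [measurable]: "u \<in> borel_measurable M" and "\<And>y. 0 \<le> u y" "\<And>y. 0 \<le> v y" "integrable M v"
    for u v :: "'a \<Rightarrow> real"
  proof -
    have "(\<integral>\<^sup>+y. u y + v y \<partial>M) = (\<integral>\<^sup>+y. ennreal (u y) + ennreal (v y) \<partial>M)"
      using that by (intro nn_integral_cong) (simp add: ennreal_plus)
    also have "\<dots> = (\<integral>\<^sup>+y. u y \<partial>M) + (\<integral>\<^sup>+y. v y \<partial>M)"
      using that by (intro nn_integral_add) auto
    finally show ?thesis
      using that by (simp add: nn_integral_eq_integral)
  qed
  have "(\<integral>\<^sup>+y. f y \<partial>M) + integral\<^sup>L M h = (\<integral>\<^sup>+y. f y + h y \<partial>M)"
    using nonneg integrable by (intro nn_integral_plus[symmetric]) auto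
  also have "\<dots> \<le> (\<integral>\<^sup>+y. g y + k y \<partial>M)"
    using assms by (intro nn_integral_mono ennreal_leI) auto
  also have "\<dots> = (\<integral>\<^sup>+y. g y \<partial>M) + integral\<^sup>L M k"
    using nonneg integrable by (intro nn_integral_plus) auto
  also have "\<dots> \<le> (\<integral>\<^sup>+y. g y \<partial>M) + integral\<^sup>L M h"
    using assms by (intro add_left_mono ennreal_leI)
  finally show ?thesis
    by (simp add: add.commute)
qed

section \<open>Distribution functions and quantiles\<close>

lemma is_CDF_real_distribution:
  assumes "is_CDF G"
  shows "real_distribution (cdf_measure G)"
  using assms unfolding is_CDF_def mono_def by (intro real_distribution_interval_measure) auto

lemma
  assumes "is_CDF G"
  shows emeasure_cdf_measure_atMost: "emeasure (cdf_measure G) {..x} = G x"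
    and measure_cdf_measure_atMost: "measure (cdf_measure G) {..x} = G x"
  using assms unfolding is_CDF_def mono_def
  by (auto intro: emeasure_interval_measure_Iic measure_interval_measure_Iic)

lemma is_CDF_bdd_above_sublevel:
  assumes "is_CDF G" "\<alpha> < 1"
  shows "bdd_above {s. G s \<le> \<alpha>}"
proof -
  have "(G \<longlongrightarrow> 1) at_top" using assms(1) unfolding is_CDF_def by auto
  then obtain b where b: "\<And>s. b \<le> s \<Longrightarrow> \<alpha> < G s"
    using order_tendstoD(1)[of G 1 at_top \<alpha>] assms(2) by (auto simp: eventually_at_top_linorder)
  have "s \<le> b" if "G s \<le> \<alpha>" for s
    using b[of s] that by linarith
  then show ?thesis
    by (intro bdd_aboveI[of _ b]) auto
qed

lemma cdf_le_below_quantile: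
  assumes G: "is_CDF G" and "0 < \<alpha>" "\<alpha> < 1" and "is_quantile \<alpha> G q" and "s < q"
  shows "G s \<le> \<alpha>"
proof -
  have "(G \<longlongrightarrow> 0) at_bot" "mono G" using G unfolding is_CDF_def by auto
  then obtain s0 where "G s0 < \<alpha>"
    using order_tendstoD(2)[of G 0 at_bot \<alpha>] \<open>0 < \<alpha>\<close> by (auto simp: eventually_at_bot_linorder)
  then have "{s. G s \<le> \<alpha>} \<noteq> {}" by (auto intro: less_imp_le)
  moreover have "s < Sup {s. G s \<le> \<alpha>}"
    using assms unfolding is_quantile_def by linarith
  ultimately obtain t where "G t \<le> \<alpha>" "s < t"
    using less_cSup_iff[OF _ is_CDF_bdd_above_sublevel[OF G \<open>\<alpha> < 1\<close>]] by blast
  then show ?thesis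
    using monoD[OF \<open>mono G\<close>, of s t] by linarith
qed

lemma cdf_ge_above_quantile:
  assumes G: "is_CDF G" and "\<alpha> < 1" and "is_quantile \<alpha> G q" and "q \<le> x"
  shows "\<alpha> \<le> G x"
proof (rule ccontr)
  assume "\<not> \<alpha> \<le> G x"
  moreover have "(G \<longlongrightarrow> G x) (at_right x)"
    using G unfolding is_CDF_def continuous_within by auto
  ultimately have "eventually (\<lambda>s. G s < \<alpha>) (at_right x)"
    by (intro order_tendstoD(2)) auto
  then obtain s where "x < s" "G s < \<alpha>"
    using eventually_happens'[OF trivial_limit_at_right_real eventually_conj[OF eventually_at_right_less]]
    by blast
  then have "s \<le> Sup {s. G s < \<alpha>}"
    using is_CDF_bdd_above_sublevel[OF G \<open>\<alpha> < 1\<close>]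
    by (intro cSup_upper) (auto intro: bdd_above_mono)
  then show False
    using assms \<open>x < s\<close> unfolding is_quantile_def by linarith
qed

lemma measure_lessThan_le_below_quantile:
  assumes G: "is_CDF G" and \<alpha>: "0 < \<alpha>" "\<alpha> < 1" and q: "is_quantile \<alpha> G q" and "x \<le> q"
  shows "measure (cdf_measure G) {..<x} \<le> \<alpha>"
proof -
  interpret real_distribution "cdf_measure G" by (rule is_CDF_real_distribution[OF G])
  have "(G \<longlongrightarrow> measure (cdf_measure G) {..<x}) (at_left x)"
    using cdf_at_left[of x] by (simp add: cdf_def measure_cdf_measure_atMost[OF G])
  moreover have "eventually (\<lambda>s. G s \<le> \<alpha>) (at_left x)"
    using eventually_at_left_real[of "x - 1" x]
    by (rule eventually_mono) (use cdf_le_below_quantile[OF G \<alpha> q] \<open>x \<le> q\<close> in auto)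
  ultimately show ?thesis
    by (rule tendsto_upperbound) simp
qed

lemma measure_greaterThan_le_above_quantile:
  assumes G: "is_CDF G" and "\<alpha> < 1" and q: "is_quantile \<alpha> G q" and "q \<le> x"
  shows "measure (cdf_measure G) {x<..} \<le> 1 - \<alpha>"
proof -
  interpret real_distribution "cdf_measure G" by (rule is_CDF_real_distribution[OF G])
  have "{x<..} = space (cdf_measure G) - {..x}" by auto
  then have "measure (cdf_measure G) {x<..} = 1 - G x"
    using prob_compl[of "{..x}"] measure_cdf_measure_atMost[OF G] by simp
  then show ?thesis
    using cdf_ge_above_quantile[OF assms] by simp
qed

section \<open>Quantile scores\<close>

definition quantile_score :: "real \<Rightarrow> (real \<Rightarrow> real) \<Rightarrow> real \<Rightarrow> real \<Rightarrow> real" where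
  "quantile_score \<alpha> g x y = ((if y < x then 1 else 0) - \<alpha>) * (g x - g y)"

lemma scoresQE:
  assumes "scoresQ \<alpha> S"
  obtains g where "mono g" "S = quantile_score \<alpha> g"
  using assms unfolding scoresQ_def quantile_score_def by auto

lemma quantile_score_nonneg:
  assumes "mono g" "0 \<le> \<alpha>" "\<alpha> \<le> 1"
  shows "0 \<le> quantile_score \<alpha> g x y"
proof (cases "y < x")
  case True
  then show ?thesis
    using assms monoD[OF \<open>mono g\<close>, of y x] by (simp add: quantile_score_def)
next
  case False
  then show ?thesis
    using assms monoD[OF \<open>mono g\<close>, of x y] by (simp add: quantile_score_def mult_nonneg_nonpos)
qed

lemma quantile_score_le_below:
  assumes "mono g" "x2 \<le> x1"
  shows "quantile_score \<alpha> g x1 y + \<alpha> * (g x1 - g x2)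
    \<le> quantile_score \<alpha> g x2 y + indicator {..<x1} y * (g x1 - g x2)"
proof -
  consider "y < x2" | "x2 \<le> y" "y < x1" | "x1 \<le> y" by linarith
  then show ?thesis
    using assms monoD[OF \<open>mono g\<close>, of x2 y] by cases (simp_all add: quantile_score_def algebra_simps)
qed

lemma quantile_score_le_above:
  assumes "mono g" "x1 \<le> x2"
  shows "quantile_score \<alpha> g x1 y + (1 - \<alpha>) * (g x2 - g x1)
    \<le> quantile_score \<alpha> g x2 y + indicator {x1<..} y * (g x2 - g x1)"
proof -
  consider "y \<le> x1" | "x1 < y" "y < x2" | "x1 < y" "x2 \<le> y" by linarith
  then show ?thesis
    using assms monoD[OF \<open>mono g\<close>, of y x2] by cases (simp_all add: quantile_score_def algebra_simps)
qed

lemma borel_measurable_quantile_score: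
  assumes "mono g"
  shows "case_prod (quantile_score \<alpha> g) \<in> borel_measurable borel"
proof -
  have [measurable]: "g \<in> borel_measurable borel"
    using assms by (rule borel_measurable_mono)
  have "case_prod (quantile_score \<alpha> g) \<in> borel_measurable (borel \<Otimes>\<^sub>M borel)"
    unfolding quantile_score_def case_prod_beta by measurable
  then show ?thesis
    by (simp add: borel_prod)
qed

lemma nn_integral_quantile_score_mono:
  assumes G: "is_CDF G" and \<alpha>: "0 < \<alpha>" "\<alpha> < 1" and q: "is_quantile \<alpha> G q" and g: "mono g"
    and between: "(x2 \<le> x1 \<and> x1 \<le> q) \<or> (q \<le> x1 \<and> x1 \<le> x2)"
  shows "(\<integral>\<^sup>+y. quantile_score \<alpha> g x1 y \<partial>cdf_measure G) \<le> (\<integral>\<^sup>+y. quantile_score \<alpha> g x2 y \<partial>cdf_measure G)"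
proof -
  interpret real_distribution "cdf_measure G" by (rule is_CDF_real_distribution[OF G])
  have [measurable]: "g \<in> borel_measurable borel"
    using g by (rule borel_measurable_mono)
  have [measurable]: "quantile_score \<alpha> g x \<in> borel_measurable (cdf_measure G)" for x
    unfolding quantile_score_def by measurable
  note nonneg = quantile_score_nonneg[OF g less_imp_le[OF \<alpha>(1)] less_imp_le[OF \<alpha>(2)]]
  have [simp]: "prob UNIV = 1"
    using prob_space by simp
  have [simp]: "integrable (cdf_measure G) (indicat_real A)" if "A \<in> sets borel" for A
    using that by (intro integrable_real_indicator) (auto simp: less_top[symmetric])
  from between show ?thesis
  proof
    assume x: "x2 \<le> x1 \<and> x1 \<le> q"
    then have "0 \<le> g x1 - g x2" using monoD[OF g] by auto
    moreover from this have "prob {..<x1} * (g x1 - g x2) \<le> \<alpha> * (g x1 - g x2)"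
      using measure_lessThan_le_below_quantile[OF G \<alpha> q] x by (intro mult_right_mono) auto
    ultimately show ?thesis
      using quantile_score_le_below[OF g] x \<alpha>
      by (intro nn_integral_mono_compensated[where h = "\<lambda>_. \<alpha> * (g x1 - g x2)"
          and k = "\<lambda>y. indicator {..<x1} y * (g x1 - g x2)"])
        (auto simp: nonneg)
  next
    assume x: "q \<le> x1 \<and> x1 \<le> x2"
    then have "0 \<le> g x2 - g x1" using monoD[OF g] by auto
    moreover from this have "prob {x1<..} * (g x2 - g x1) \<le> (1 - \<alpha>) * (g x2 - g x1)"
      using measure_greaterThan_le_above_quantile[OF G \<alpha>(2) q] x by (intro mult_right_mono) auto
    ultimately show ?thesis
      using quantile_score_le_above[OF g] x \<alpha>
      by (intro nn_integral_mono_compensated[where h = "\<lambda>_. (1 - \<alpha>) * (g x2 - g x1)"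
          and k = "\<lambda>y. indicator {x1<..} y * (g x2 - g x1)"])
        (auto simp: nonneg)
  qed
qed

section \<open>Left derivatives of convex functions\<close>

lemma convex_on_real_slope_le:
  fixes f :: "real \<Rightarrow> real"
  assumes f: "convex_on UNIV f" and "a < b" "b < c"
  shows "(f b - f a) / (b - a) \<le> (f c - f a) / (c - a)"
    and "(f c - f a) / (c - a) \<le> (f c - f b) / (c - b)"
proof -
  have swap: "(f u - f v) / (u - v) = (f v - f u) / (v - u)" for u v
    by (metis minus_diff_eq minus_divide_divide)
  show "(f b - f a) / (b - a) \<le> (f c - f a) / (c - a)"
    "(f c - f a) / (c - a) \<le> (f c - f b) / (c - b)"
    using convex_on_slope_le[OF f _ _ assms(2,3)] by (simp_all add: swap[of a b] swap[of a c] swap[of b c])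
qed

(* The difference quotients at x increase as z tends to x from the left and are bounded by those
   from the right, so the limit defining left_deriv exists and is their supremum. *)
lemma
  fixes \<phi> :: "real \<Rightarrow> real"
  assumes cv: "convex_on UNIV \<phi>"
  shows slope_le_left_deriv: "w < x \<Longrightarrow> (\<phi> w - \<phi> x) / (w - x) \<le> left_deriv \<phi> x"
    and left_deriv_le_slope: "x < w \<Longrightarrow> left_deriv \<phi> x \<le> (\<phi> w - \<phi> x) / (w - x)"
proof -
  define q where "q z = (\<phi> z - \<phi> x) / (z - x)" for z
  have swap: "q z = (\<phi> x - \<phi> z) / (x - z)" for z
    unfolding q_def by (metis minus_diff_eq minus_divide_divide)
  have q_mono: "q z \<le> q z'" if "z < z'" "z' < x" for z z'
    using convex_on_real_slope_le(2)[OF cv that] by (simp add: swap)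
  have q_le_right: "q z \<le> q w" if "z < x" "x < w" for z w
    using convex_on_real_slope_le[OF cv that] by (simp add: swap[of z] q_def[of w])
  define D where "D = Sup (q ` {..<x})"
  have bdd: "bdd_above (q ` {..<x})"
    using q_le_right[of _ "x + 1"] by (auto intro!: bdd_aboveI2)
  have le_D: "q w \<le> D" if "w < x" for w
    unfolding D_def using bdd that by (auto intro!: cSup_upper)
  have D_le: "D \<le> q w" if "x < w" for w
    unfolding D_def using q_le_right that by (auto intro!: cSup_least)
  have "(q \<longlongrightarrow> D) (at_left x)"
  proof (rule order_tendstoI)
    fix a assume "a < D"
    then obtain z0 where "z0 < x" "a < q z0"
      using less_cSup_iff[OF _ bdd] unfolding D_def by auto
    with q_mono have above: "a < q z" if "z \<in> {z0<..<x}" for z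
      using that by (meson greaterThanLessThan_iff less_le_trans)
    show "eventually (\<lambda>z. a < q z) (at_left x)"
      using eventually_at_left_real[OF \<open>z0 < x\<close>] by (rule eventually_mono) (rule above)
  next
    fix a assume "D < a"
    with le_D have below: "q z < a" if "z \<in> {x - 1<..<x}" for z
      using that by (meson greaterThanLessThan_iff le_less_trans)
    show "eventually (\<lambda>z. q z < a) (at_left x)"
      using eventually_at_left_real[of "x - 1" x, simplified] by (rule eventually_mono) (simp add: below)
  qed
  then have "left_deriv \<phi> x = D"
    unfolding left_deriv_def q_def[abs_def] by (intro tendsto_Lim) simp_all
  then show "w < x \<Longrightarrow> (\<phi> w - \<phi> x) / (w - x) \<le> left_deriv \<phi> x"
    and "x < w \<Longrightarrow> left_deriv \<phi> x \<le> (\<phi> w - \<phi> x) / (w - x)"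
    using le_D D_le unfolding q_def by auto
qed

lemma convex_on_left_deriv_subgradient:
  fixes \<phi> :: "real \<Rightarrow> real"
  assumes cv: "convex_on UNIV \<phi>"
  shows "\<phi> x + left_deriv \<phi> x * (z - x) \<le> \<phi> z"
proof (cases z x rule: linorder_cases)
  case less
  with slope_le_left_deriv[OF cv less] show ?thesis
    by (simp add: divide_le_eq algebra_simps)
next
  case greater
  with left_deriv_le_slope[OF cv greater] show ?thesis
    by (simp add: le_divide_eq algebra_simps)
qed simp

lemma convex_on_left_deriv_mono:
  fixes \<phi> :: "real \<Rightarrow> real"
  assumes cv: "convex_on UNIV \<phi>"
  shows "mono (left_deriv \<phi>)"
proof (rule monoI)
  fix x y :: real assume "x \<le> y"
  show "left_deriv \<phi> x \<le> left_deriv \<phi> y"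
  proof (cases "x = y")
    case False
    with \<open>x \<le> y\<close> have "x < y" by simp
    have "left_deriv \<phi> x \<le> (\<phi> y - \<phi> x) / (y - x)"
      by (rule left_deriv_le_slope[OF cv \<open>x < y\<close>])
    also have "\<dots> = (\<phi> x - \<phi> y) / (x - y)"
      by (metis minus_diff_eq minus_divide_divide)
    also have "\<dots> \<le> left_deriv \<phi> y"
      by (rule slope_le_left_deriv[OF cv \<open>x < y\<close>])
    finally show ?thesis .
  qed simp
qed

section \<open>Expectile scores\<close>

definition bregman :: "(real \<Rightarrow> real) \<Rightarrow> real \<Rightarrow> real \<Rightarrow> real" where
  "bregman \<phi> x y = \<phi> y - \<phi> x - left_deriv \<phi> x * (y - x)"

definition expectile_score :: "real \<Rightarrow> (real \<Rightarrow> real) \<Rightarrow> real \<Rightarrow> real \<Rightarrow> real" where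
  "expectile_score \<alpha> \<phi> x y = \<bar>(if y < x then 1 else 0) - \<alpha>\<bar> * bregman \<phi> x y"

lemma scoresEE:
  assumes "scoresE \<alpha> S"
  obtains \<phi> where "convex_on UNIV \<phi>" "S = expectile_score \<alpha> \<phi>"
  using assms unfolding scoresE_def expectile_score_def bregman_def by auto

lemma bregman_nonneg:
  assumes "convex_on UNIV \<phi>"
  shows "0 \<le> bregman \<phi> x y"
  using convex_on_left_deriv_subgradient[OF assms, of x y] by (simp add: bregman_def)

lemma bregman_le:
  assumes "convex_on UNIV \<phi>"
  shows "bregman \<phi> x y \<le> (left_deriv \<phi> y - left_deriv \<phi> x) * (y - x)"
  using convex_on_left_deriv_subgradient[OF assms, of y x] by (simp add: bregman_def algebra_simps)

lemma bregman_change_point: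
  "bregman \<phi> x1 y = bregman \<phi> x2 y - bregman \<phi> x2 x1 - (left_deriv \<phi> x1 - left_deriv \<phi> x2) * (y - x1)"
  by (simp add: bregman_def algebra_simps)

lemma expectile_score_nonneg:
  assumes "convex_on UNIV \<phi>"
  shows "0 \<le> expectile_score \<alpha> \<phi> x y"
  using bregman_nonneg[OF assms] by (simp add: expectile_score_def)

lemma expectile_score_le_below:
  assumes cv: "convex_on UNIV \<phi>" and \<alpha>: "0 \<le> \<alpha>" "\<alpha> \<le> 1" and "x2 \<le> x1"
  defines "k \<equiv> left_deriv \<phi> x1 - left_deriv \<phi> x2"
  shows "expectile_score \<alpha> \<phi> x1 y + k * \<alpha> * max (y - x1) 0
    \<le> expectile_score \<alpha> \<phi> x2 y + k * (1 - \<alpha>) * max (x1 - y) 0"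
proof -
  have shift: "bregman \<phi> x1 y \<le> bregman \<phi> x2 y - k * (y - x1)"
    using bregman_change_point[of \<phi> x1 y x2] bregman_nonneg[OF cv, of x2 x1] by (simp add: k_def)
  consider "y < x2" | "x2 \<le> y" "y < x1" | "x1 \<le> y" by linarith
  then show ?thesis
  proof cases
    case 1
    then have "(1 - \<alpha>) * bregman \<phi> x1 y \<le> (1 - \<alpha>) * (bregman \<phi> x2 y + k * (x1 - y))"
      using shift \<alpha> by (intro mult_left_mono) (auto simp: algebra_simps)
    with 1 \<open>x2 \<le> x1\<close> \<alpha> show ?thesis
      by (simp add: expectile_score_def algebra_simps)
  next
    case 2
    have "bregman \<phi> x1 y \<le> (left_deriv \<phi> x1 - left_deriv \<phi> y) * (x1 - y)"
      using bregman_le[OF cv, of x1 y] by (simp add: algebra_simps)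
    also have "\<dots> \<le> k * (x1 - y)"
      unfolding k_def using 2 monoD[OF convex_on_left_deriv_mono[OF cv], of x2 y]
      by (intro mult_right_mono) auto
    finally have "(1 - \<alpha>) * bregman \<phi> x1 y \<le> (1 - \<alpha>) * (k * (x1 - y))"
      using \<alpha> by (intro mult_left_mono) auto
    moreover have "0 \<le> \<alpha> * bregman \<phi> x2 y"
      using \<alpha> bregman_nonneg[OF cv] by simp
    ultimately show ?thesis using 2 \<alpha>
      by (simp add: expectile_score_def algebra_simps)
  next
    case 3
    then have "\<alpha> * (bregman \<phi> x1 y + k * (y - x1)) \<le> \<alpha> * bregman \<phi> x2 y"
      using shift \<alpha> by (intro mult_left_mono) auto
    with 3 \<open>x2 \<le> x1\<close> \<alpha> show ?thesis
      by (simp add: expectile_score_def algebra_simps)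
  qed
qed

lemma expectile_score_le_above:
  assumes cv: "convex_on UNIV \<phi>" and \<alpha>: "0 \<le> \<alpha>" "\<alpha> \<le> 1" and "x1 \<le> x2"
  defines "k \<equiv> left_deriv \<phi> x2 - left_deriv \<phi> x1"
  shows "expectile_score \<alpha> \<phi> x1 y + k * (1 - \<alpha>) * max (x1 - y) 0
    \<le> expectile_score \<alpha> \<phi> x2 y + k * \<alpha> * max (y - x1) 0"
proof -
  have shift: "bregman \<phi> x1 y \<le> bregman \<phi> x2 y + k * (y - x1)"
    using bregman_change_point[of \<phi> x1 y x2] bregman_nonneg[OF cv, of x2 x1]
    by (simp add: k_def algebra_simps)
  consider "y < x1" | "x1 \<le> y" "y < x2" | "x2 \<le> y" by linarith
  then show ?thesis
  proof cases
    case 1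
    then have "(1 - \<alpha>) * (bregman \<phi> x1 y + k * (x1 - y)) \<le> (1 - \<alpha>) * bregman \<phi> x2 y"
      using shift \<alpha> by (intro mult_left_mono) (auto simp: algebra_simps)
    with 1 \<open>x1 \<le> x2\<close> \<alpha> show ?thesis
      by (simp add: expectile_score_def algebra_simps)
  next
    case 2
    have "bregman \<phi> x1 y \<le> (left_deriv \<phi> y - left_deriv \<phi> x1) * (y - x1)"
      by (rule bregman_le[OF cv])
    also have "\<dots> \<le> k * (y - x1)"
      unfolding k_def using 2 monoD[OF convex_on_left_deriv_mono[OF cv], of y x2]
      by (intro mult_right_mono) auto
    finally have "\<alpha> * bregman \<phi> x1 y \<le> \<alpha> * (k * (y - x1))"
      using \<alpha> by (intro mult_left_mono) auto
    moreover have "0 \<le> (1 - \<alpha>) * bregman \<phi> x2 y"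
      using \<alpha> bregman_nonneg[OF cv] by simp
    ultimately show ?thesis using 2 \<alpha>
      by (simp add: expectile_score_def algebra_simps)
  next
    case 3
    then have "\<alpha> * bregman \<phi> x1 y \<le> \<alpha> * (bregman \<phi> x2 y + k * (y - x1))"
      using shift \<alpha> by (intro mult_left_mono) auto
    with 3 \<open>x1 \<le> x2\<close> \<alpha> show ?thesis
      by (simp add: expectile_score_def algebra_simps)
  qed
qed

lemma
  assumes "is_CDF G" "is_expectile \<alpha> G t"
  shows integrable_expectile_lower: "integrable (cdf_measure G) (\<lambda>y. max (x - y) 0)"
    and integrable_expectile_upper: "integrable (cdf_measure G) (\<lambda>y. max (y - x) 0)"
proof -
  interpret real_distribution "cdf_measure G" by (rule is_CDF_real_distribution[OF assms(1)])
  show "integrable (cdf_measure G) (\<lambda>y. max (x - y) 0)" "integrable (cdf_measure G) (\<lambda>y. max (y - x) 0)"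
    using assms(2) unfolding is_expectile_def
    by (auto intro!: integrable_max Bochner_Integration.integrable_diff)
qed

lemma expectile_balance:
  assumes "is_expectile \<alpha> G t"
  shows "(1 - \<alpha>) * (\<integral>y. max (t - y) 0 \<partial>cdf_measure G) = \<alpha> * (\<integral>y. max (y - t) 0 \<partial>cdf_measure G)"
proof -
  have "(LINT y:{..t}|cdf_measure G. t - y) = (\<integral>y. max (t - y) 0 \<partial>cdf_measure G)"
    "(LINT y:{t<..}|cdf_measure G. y - t) = (\<integral>y. max (y - t) 0 \<partial>cdf_measure G)"
    unfolding set_lebesgue_integral_def
    by (auto intro!: Bochner_Integration.integral_cong simp: indicator_def)
  with assms show ?thesis
    unfolding is_expectile_def by simp
qed

lemma expectile_imbalance_below:
  assumes G: "is_CDF G" and t: "is_expectile \<alpha> G t" and "0 \<le> \<alpha>" "\<alpha> \<le> 1" and "x \<le> t"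
  shows "(1 - \<alpha>) * (\<integral>y. max (x - y) 0 \<partial>cdf_measure G) \<le> \<alpha> * (\<integral>y. max (y - x) 0 \<partial>cdf_measure G)"
proof -
  have "(1 - \<alpha>) * (\<integral>y. max (x - y) 0 \<partial>cdf_measure G) \<le> (1 - \<alpha>) * (\<integral>y. max (t - y) 0 \<partial>cdf_measure G)"
    using assms integrable_expectile_lower[OF G t]
    by (intro mult_left_mono integral_mono) auto
  also have "\<dots> = \<alpha> * (\<integral>y. max (y - t) 0 \<partial>cdf_measure G)"
    by (rule expectile_balance[OF t])
  also have "\<dots> \<le> \<alpha> * (\<integral>y. max (y - x) 0 \<partial>cdf_measure G)"
    using assms integrable_expectile_upper[OF G t]
    by (intro mult_left_mono integral_mono) auto
  finally show ?thesis .
qed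

lemma expectile_imbalance_above:
  assumes G: "is_CDF G" and t: "is_expectile \<alpha> G t" and "0 \<le> \<alpha>" "\<alpha> \<le> 1" and "t \<le> x"
  shows "\<alpha> * (\<integral>y. max (y - x) 0 \<partial>cdf_measure G) \<le> (1 - \<alpha>) * (\<integral>y. max (x - y) 0 \<partial>cdf_measure G)"
proof -
  have "\<alpha> * (\<integral>y. max (y - x) 0 \<partial>cdf_measure G) \<le> \<alpha> * (\<integral>y. max (y - t) 0 \<partial>cdf_measure G)"
    using assms integrable_expectile_upper[OF G t]
    by (intro mult_left_mono integral_mono) auto
  also have "\<dots> = (1 - \<alpha>) * (\<integral>y. max (t - y) 0 \<partial>cdf_measure G)"
    by (rule expectile_balance[OF t, symmetric])
  also have "\<dots> \<le> (1 - \<alpha>) * (\<integral>y. max (x - y) 0 \<partial>cdf_measure G)"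
    using assms integrable_expectile_lower[OF G t]
    by (intro mult_left_mono integral_mono) auto
  finally show ?thesis .
qed

lemma borel_measurable_expectile_score:
  assumes cv: "convex_on UNIV \<phi>"
  shows "case_prod (expectile_score \<alpha> \<phi>) \<in> borel_measurable borel"
proof -
  have [measurable]: "\<phi> \<in> borel_measurable borel"
    using convex_on_continuous[OF open_UNIV cv] by (rule borel_measurable_continuous_onI)
  have [measurable]: "left_deriv \<phi> \<in> borel_measurable borel"
    using convex_on_left_deriv_mono[OF cv] by (rule borel_measurable_mono)
  have "case_prod (expectile_score \<alpha> \<phi>) \<in> borel_measurable (borel \<Otimes>\<^sub>M borel)"
    unfolding expectile_score_def bregman_def case_prod_beta by measurable
  then show ?thesis
    by (simp add: borel_prod)
qed

lemma nn_integral_expectile_score_mono: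
  assumes G: "is_CDF G" and \<alpha>: "0 \<le> \<alpha>" "\<alpha> \<le> 1" and t: "is_expectile \<alpha> G t" and cv: "convex_on UNIV \<phi>"
    and between: "(x2 \<le> x1 \<and> x1 \<le> t) \<or> (t \<le> x1 \<and> x1 \<le> x2)"
  shows "(\<integral>\<^sup>+y. expectile_score \<alpha> \<phi> x1 y \<partial>cdf_measure G) \<le> (\<integral>\<^sup>+y. expectile_score \<alpha> \<phi> x2 y \<partial>cdf_measure G)"
proof -
  have [measurable]: "\<phi> \<in> borel_measurable borel"
    using convex_on_continuous[OF open_UNIV cv] by (rule borel_measurable_continuous_onI)
  have [measurable]: "expectile_score \<alpha> \<phi> x \<in> borel_measurable (cdf_measure G)" for x
    unfolding expectile_score_def bregman_def by measurable
  note integrable = integrable_expectile_lower[OF G t] integrable_expectile_upper[OF G t]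
  note nonneg = expectile_score_nonneg[OF cv]
  from between show ?thesis
  proof
    assume x: "x2 \<le> x1 \<and> x1 \<le> t"
    define k where "k = left_deriv \<phi> x1 - left_deriv \<phi> x2"
    have "0 \<le> k"
      using x monoD[OF convex_on_left_deriv_mono[OF cv], of x2 x1] by (simp add: k_def)
    moreover from this have "k * ((1 - \<alpha>) * (\<integral>y. max (x1 - y) 0 \<partial>cdf_measure G))
        \<le> k * (\<alpha> * (\<integral>y. max (y - x1) 0 \<partial>cdf_measure G))"
      using expectile_imbalance_below[OF G t \<alpha>] x by (intro mult_left_mono) auto
    ultimately show ?thesis
      using expectile_score_le_below[OF cv \<alpha>] x \<alpha>
      by (intro nn_integral_mono_compensated[where h = "\<lambda>y. k * \<alpha> * max (y - x1) 0"
          and k = "\<lambda>y. k * (1 - \<alpha>) * max (x1 - y) 0"])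
        (auto simp: nonneg integrable k_def mult.assoc)
  next
    assume x: "t \<le> x1 \<and> x1 \<le> x2"
    define k where "k = left_deriv \<phi> x2 - left_deriv \<phi> x1"
    have "0 \<le> k"
      using x monoD[OF convex_on_left_deriv_mono[OF cv], of x1 x2] by (simp add: k_def)
    moreover from this have "k * (\<alpha> * (\<integral>y. max (y - x1) 0 \<partial>cdf_measure G))
        \<le> k * ((1 - \<alpha>) * (\<integral>y. max (x1 - y) 0 \<partial>cdf_measure G))"
      using expectile_imbalance_above[OF G t \<alpha>] x by (intro mult_left_mono) auto
    ultimately show ?thesis
      using expectile_score_le_above[OF cv \<alpha>] x \<alpha>
      by (intro nn_integral_mono_compensated[where h = "\<lambda>y. k * (1 - \<alpha>) * max (x1 - y) 0"
          and k = "\<lambda>y. k * \<alpha> * max (y - x1) 0"])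
        (auto simp: nonneg integrable k_def mult.assoc)
  qed
qed

section \<open>Disintegration by an ideal forecast\<close>

lemma is_CDF_bounds:
  assumes "is_CDF G"
  shows "0 \<le> G x" "G x \<le> 1"
proof -
  interpret real_distribution "cdf_measure G" by (rule is_CDF_real_distribution[OF assms])
  show "0 \<le> G x" "G x \<le> 1"
    using cdf_nonneg[of x] cdf_bounded_prob[of x] by (simp_all add: cdf_def measure_cdf_measure_atMost[OF assms])
qed

context
  fixes M A :: "'a measure" and Y :: "'a \<Rightarrow> real" and F :: "'a \<Rightarrow> real \<Rightarrow> real"
  assumes prob: "prob_space M" and sub: "subalgebra M A" and Y [measurable]: "Y \<in> borel_measurable M"
    and ideal: "ideal_forecast M A Y F"
begin

lemma ideal_forecast_CDF: "\<omega> \<in> space M \<Longrightarrow> is_CDF (F \<omega>)"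
  using ideal unfolding ideal_forecast_def by auto

lemma ideal_forecast_measurable [measurable]: "(\<lambda>\<omega>. F \<omega> t) \<in> borel_measurable A"
  using ideal unfolding ideal_forecast_def by auto

lemma ideal_forecast_kernel_measurable:
  "(\<lambda>\<omega>. cdf_measure (F \<omega>)) \<in> A \<rightarrow>\<^sub>M prob_algebra borel"
proof (rule measurable_prob_algebra_generated[where \<Omega> = UNIV and G = "range atMost"])
  have space_A: "space A = space M" using sub unfolding subalgebra_def by auto
  show "sets (borel :: real measure) = sigma_sets UNIV (range atMost)"
    by (simp add: borel_eq_atMost)
  show "Int_stable (range atMost :: real set set)"
    by (auto simp: Int_stable_def)
  show "prob_space (cdf_measure (F \<omega>))" if "\<omega> \<in> space A" for \<omega>
    using is_CDF_real_distribution[OF ideal_forecast_CDF] that space_A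
    by (auto simp: real_distribution_def)
  fix B :: "real set" assume "B \<in> range atMost"
  then obtain b where B: "B = {..b}" by auto
  have "(\<lambda>\<omega>. ennreal (F \<omega> b)) \<in> borel_measurable A"
    by measurable
  then show "(\<lambda>\<omega>. emeasure (cdf_measure (F \<omega>)) B) \<in> borel_measurable A"
    by (rule measurable_cong[THEN iffD1, rotated])
      (simp add: B space_A emeasure_cdf_measure_atMost[OF ideal_forecast_CDF])
qed auto

lemma emeasure_distr_pair_atMost:
  fixes X :: "'a \<Rightarrow> real"
  assumes X [measurable]: "X \<in> borel_measurable A"
  shows "emeasure (distr M borel (\<lambda>\<omega>. (X \<omega>, Y \<omega>))) {..(a, b)}
    = (\<integral>\<^sup>+\<omega>. indicator {\<omega> \<in> space M. X \<omega> \<le> a} \<omega> * F \<omega> b \<partial>M)"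
proof -
  interpret prob_space M by (rule prob)
  have space_A: "space A = space M" and sets_A: "sets A \<subseteq> sets M"
    using sub unfolding subalgebra_def by auto
  define B where "B = {\<omega> \<in> space M. X \<omega> \<le> a}"
  have "{\<omega> \<in> space A. X \<omega> \<le> a} \<in> sets A"
    by measurable
  then have B_A: "B \<in> sets A"
    by (simp add: B_def space_A)
  have [measurable]: "B \<in> sets M" "X \<in> borel_measurable M" "(\<lambda>\<omega>. F \<omega> b) \<in> borel_measurable M"
    using B_A sets_A measurable_from_subalg[OF sub X] measurable_from_subalg[OF sub ideal_forecast_measurable]
    by auto
  have bounds: "0 \<le> F \<omega> b" "F \<omega> b \<le> 1" if "\<omega> \<in> space M" for \<omega>
    using is_CDF_bounds[OF ideal_forecast_CDF[OF that]] by auto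
  have "emeasure (distr M borel (\<lambda>\<omega>. (X \<omega>, Y \<omega>))) {..(a, b)} = measure M (B \<inter> {\<omega> \<in> space M. Y \<omega> \<le> b})"
    by (simp add: emeasure_distr emeasure_eq_measure B_def less_eq_prod_def)
      (intro arg_cong[where f = prob], auto)
  also have "\<dots> = (LINT \<omega>:B|M. F \<omega> b)"
    using ideal B_A unfolding ideal_forecast_def by auto
  also have "\<dots> = (\<integral>\<^sup>+\<omega>. indicator B \<omega> * F \<omega> b \<partial>M)"
    unfolding set_lebesgue_integral_def real_scaleR_def using bounds
    by (intro nn_integral_eq_integral[symmetric] integrable_const_bound[where B = 1])
      (auto simp: indicator_def)
  finally show ?thesis
    by (simp add: B_def)
qed

lemma pair_kernel_measurable:
  fixes X :: "'a \<Rightarrow> real"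
  assumes X: "X \<in> borel_measurable A"
  shows "(\<lambda>\<omega>. distr (cdf_measure (F \<omega>)) borel (Pair (X \<omega>))) \<in> M \<rightarrow>\<^sub>M subprob_algebra borel"
proof (rule measurable_distr2)
  have [measurable]: "X \<in> borel_measurable M"
    using measurable_from_subalg[OF sub X] .
  have "(\<lambda>p. (X (fst p), snd p)) \<in> M \<Otimes>\<^sub>M borel \<rightarrow>\<^sub>M (borel :: (real \<times> real) measure)"
    by measurable
  then show "(\<lambda>(\<omega>, y). (X \<omega>, y)) \<in> M \<Otimes>\<^sub>M borel \<rightarrow>\<^sub>M (borel :: (real \<times> real) measure)"
    by (simp add: case_prod_beta')
  show "(\<lambda>\<omega>. cdf_measure (F \<omega>)) \<in> M \<rightarrow>\<^sub>M subprob_algebra borel"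
    using measurable_prob_algebraD[OF measurable_from_subalg[OF sub ideal_forecast_kernel_measurable]] .
qed

lemma distr_pair_eq_bind_ideal_forecast:
  fixes X :: "'a \<Rightarrow> real"
  assumes X [measurable]: "X \<in> borel_measurable A"
  shows "distr M borel (\<lambda>\<omega>. (X \<omega>, Y \<omega>)) = M \<bind> (\<lambda>\<omega>. distr (cdf_measure (F \<omega>)) borel (Pair (X \<omega>)))"
    (is "_ = M \<bind> ?L")
proof -
  interpret prob_space M by (rule prob)
  have [measurable]: "X \<in> borel_measurable M"
    using measurable_from_subalg[OF sub X] .
  note L = pair_kernel_measurable[OF X]
  show ?thesis
  proof (rule measure_eqI_generator_eq[where \<Omega> = UNIV and E = "range atMost"
        and A = "\<lambda>i. {..(real i, real i)}"])
    show "Int_stable (range atMost :: (real \<times> real) set set)"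
    proof (rule Int_stableI)
      fix U V :: "(real \<times> real) set" assume "U \<in> range atMost" "V \<in> range atMost"
      then obtain u v where "U = {..u}" "V = {..v}" by auto
      moreover have "{..u} \<inter> {..v} = {..inf u v}" by auto
      ultimately show "U \<inter> V \<in> range atMost" by auto
    qed
    show "sets (distr M borel (\<lambda>\<omega>. (X \<omega>, Y \<omega>))) = sigma_sets UNIV (range atMost)"
      by (simp add: borel_eq_atMost)
    have "sets (M \<bind> ?L) = sets (borel :: (real \<times> real) measure)"
      by (rule sets_bind[OF _ not_empty]) simp
    then show "sets (M \<bind> ?L) = sigma_sets UNIV (range atMost)"
      by (simp add: borel_eq_atMost)
    show "(\<Union>i. {..(real i, real i)}) = UNIV"
    proof safe
      fix a b :: real
      obtain n :: nat where "max a b \<le> real n" using real_arch_simple by blast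
      then show "(a, b) \<in> (\<Union>i. {..(real i, real i)})" by (auto simp: less_eq_prod_def)
    qed auto
    show "emeasure (distr M borel (\<lambda>\<omega>. (X \<omega>, Y \<omega>))) {..(real i, real i)} \<noteq> \<infinity>" for i
      by (simp add: emeasure_distr)
    fix Z :: "(real \<times> real) set" assume "Z \<in> range atMost"
    then obtain a b where Z: "Z = {..(a, b)}" by (auto simp: surj_pair)
    have L_Z: "emeasure (?L \<omega>) Z = indicator {\<omega> \<in> space M. X \<omega> \<le> a} \<omega> * F \<omega> b"
      if "\<omega> \<in> space M" for \<omega>
    proof -
      have "emeasure (?L \<omega>) Z = emeasure (cdf_measure (F \<omega>)) (Pair (X \<omega>) -` Z \<inter> space (cdf_measure (F \<omega>)))"
        by (rule emeasure_distr) (auto simp: Z)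
      also have "Pair (X \<omega>) -` Z \<inter> space (cdf_measure (F \<omega>)) = (if X \<omega> \<le> a then {..b} else {})"
        by (auto simp: Z less_eq_prod_def)
      finally show ?thesis
        using that by (simp add: emeasure_cdf_measure_atMost[OF ideal_forecast_CDF[OF that]])
    qed
    have "emeasure (distr M borel (\<lambda>\<omega>. (X \<omega>, Y \<omega>))) Z
        = (\<integral>\<^sup>+\<omega>. indicator {\<omega> \<in> space M. X \<omega> \<le> a} \<omega> * F \<omega> b \<partial>M)"
      unfolding Z by (rule emeasure_distr_pair_atMost[OF X])
    also have "\<dots> = (\<integral>\<^sup>+\<omega>. emeasure (?L \<omega>) Z \<partial>M)"
      by (intro nn_integral_cong) (simp add: L_Z)
    also have "\<dots> = emeasure (M \<bind> ?L) Z"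
      by (rule emeasure_bind[symmetric, OF not_empty L]) (simp add: Z)
    finally show "emeasure (distr M borel (\<lambda>\<omega>. (X \<omega>, Y \<omega>))) Z = emeasure (M \<bind> ?L) Z" .
  qed auto
qed

lemma nn_integral_pair_ideal_forecast:
  fixes X :: "'a \<Rightarrow> real" and h :: "real \<times> real \<Rightarrow> ennreal"
  assumes X: "X \<in> borel_measurable A" and h [measurable]: "h \<in> borel_measurable borel"
  shows "(\<integral>\<^sup>+\<omega>. h (X \<omega>, Y \<omega>) \<partial>M) = (\<integral>\<^sup>+\<omega>. (\<integral>\<^sup>+y. h (X \<omega>, y) \<partial>cdf_measure (F \<omega>)) \<partial>M)"
proof -
  have [measurable]: "X \<in> borel_measurable M"
    using measurable_from_subalg[OF sub X] .
  have "(\<integral>\<^sup>+\<omega>. h (X \<omega>, Y \<omega>) \<partial>M) = (\<integral>\<^sup>+z. h z \<partial>distr M borel (\<lambda>\<omega>. (X \<omega>, Y \<omega>)))"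
    by (simp add: nn_integral_distr)
  also have "\<dots> = (\<integral>\<^sup>+\<omega>. (\<integral>\<^sup>+z. h z \<partial>distr (cdf_measure (F \<omega>)) borel (Pair (X \<omega>))) \<partial>M)"
    unfolding distr_pair_eq_bind_ideal_forecast[OF X]
    by (rule nn_integral_bind[OF h pair_kernel_measurable[OF X]])
  also have "\<dots> = (\<integral>\<^sup>+\<omega>. (\<integral>\<^sup>+y. h (X \<omega>, y) \<partial>cdf_measure (F \<omega>)) \<partial>M)"
    by (intro nn_integral_cong) (simp add: nn_integral_distr)
  finally show ?thesis .
qed

lemma nn_integral_score_mono_ideal_forecast:
  fixes X1 X2 :: "'a \<Rightarrow> real" and S :: "real \<Rightarrow> real \<Rightarrow> real"
  assumes X: "X1 \<in> borel_measurable A" "X2 \<in> borel_measurable A"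
    and S: "case_prod S \<in> borel_measurable borel"
    and "AE \<omega> in M. (\<integral>\<^sup>+y. S (X1 \<omega>) y \<partial>cdf_measure (F \<omega>)) \<le> (\<integral>\<^sup>+y. S (X2 \<omega>) y \<partial>cdf_measure (F \<omega>))"
  shows "(\<integral>\<^sup>+\<omega>. ennreal (S (X1 \<omega>) (Y \<omega>)) \<partial>M) \<le> (\<integral>\<^sup>+\<omega>. ennreal (S (X2 \<omega>) (Y \<omega>)) \<partial>M)"
proof -
  have h: "(\<lambda>p. ennreal (case_prod S p)) \<in> borel_measurable borel"
    using S by measurable
  show ?thesis
    using nn_integral_pair_ideal_forecast[OF X(1) h] nn_integral_pair_ideal_forecast[OF X(2) h]
      nn_integral_mono_AE[OF assms(4)] by simp
qed

end

theorem mainTheorem11: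
  fixes M A :: "'a measure" and Y :: "'a \<Rightarrow> real" and F :: "'a \<Rightarrow> real \<Rightarrow> real"
    and \<alpha> :: real
  assumes "prob_space M"
    and "subalgebra M A"
    and "Y \<in> borel_measurable M"
    and "ideal_forecast M A Y F"
    and "0 < \<alpha>" and "\<alpha> < 1"
  shows "(\<forall>Q X1 X2. Q \<in> borel_measurable A \<and> X1 \<in> borel_measurable A \<and> X2 \<in> borel_measurable A
            \<and> (AE \<omega> in M. is_quantile \<alpha> (F \<omega>) (Q \<omega>))
            \<and> (AE \<omega> in M. (X2 \<omega> \<le> X1 \<omega> \<and> X1 \<omega> \<le> Q \<omega>) \<or> (Q \<omega> \<le> X1 \<omega> \<and> X1 \<omega> \<le> X2 \<omega>))
          \<longrightarrow> (\<forall>S. scoresQ \<alpha> S \<longrightarrow>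
                (\<integral>\<^sup>+\<omega>. ennreal (S (X1 \<omega>) (Y \<omega>)) \<partial>M) \<le> (\<integral>\<^sup>+\<omega>. ennreal (S (X2 \<omega>) (Y \<omega>)) \<partial>M)))
       \<and> (integrable M Y \<longrightarrow>
          (\<forall>T X1 X2. T \<in> borel_measurable A \<and> X1 \<in> borel_measurable A \<and> X2 \<in> borel_measurable A
            \<and> (AE \<omega> in M. is_expectile \<alpha> (F \<omega>) (T \<omega>))
            \<and> (AE \<omega> in M. (X2 \<omega> \<le> X1 \<omega> \<and> X1 \<omega> \<le> T \<omega>) \<or> (T \<omega> \<le> X1 \<omega> \<and> X1 \<omega> \<le> X2 \<omega>))
          \<longrightarrow> (\<forall>S. scoresE \<alpha> S \<longrightarrow>
                (\<integral>\<^sup>+\<omega>. ennreal (S (X1 \<omega>) (Y \<omega>)) \<partial>M) \<le> (\<integral>\<^sup>+\<omega>. ennreal (S (X2 \<omega>) (Y \<omega>)) \<partial>M))))"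
proof (intro conjI allI impI; elim conjE)
  note setting = assms(1-4) and \<alpha> = assms(5,6)
  fix Q X1 X2 :: "'a \<Rightarrow> real" and S :: "real \<Rightarrow> real \<Rightarrow> real"
  assume X: "Q \<in> borel_measurable A" "X1 \<in> borel_measurable A" "X2 \<in> borel_measurable A"
    and quantile: "AE \<omega> in M. is_quantile \<alpha> (F \<omega>) (Q \<omega>)"
    and between: "AE \<omega> in M. (X2 \<omega> \<le> X1 \<omega> \<and> X1 \<omega> \<le> Q \<omega>) \<or> (Q \<omega> \<le> X1 \<omega> \<and> X1 \<omega> \<le> X2 \<omega>)"
    and "scoresQ \<alpha> S"
  then obtain g where g: "mono g" and S: "S = quantile_score \<alpha> g"
    by (elim scoresQE)
  have "AE \<omega> in M. (\<integral>\<^sup>+y. S (X1 \<omega>) y \<partial>cdf_measure (F \<omega>)) \<le> (\<integral>\<^sup>+y. S (X2 \<omega>) y \<partial>cdf_measure (F \<omega>))"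
    using quantile between AE_space[of M] by eventually_elim
      (simp add: S nn_integral_quantile_score_mono[OF ideal_forecast_CDF[OF setting] \<alpha> _ g])
  then show "(\<integral>\<^sup>+\<omega>. ennreal (S (X1 \<omega>) (Y \<omega>)) \<partial>M) \<le> (\<integral>\<^sup>+\<omega>. ennreal (S (X2 \<omega>) (Y \<omega>)) \<partial>M)"
    using borel_measurable_quantile_score[OF g]
    by (intro nn_integral_score_mono_ideal_forecast[OF setting X(2,3)]) (simp_all add: S)
next
  note setting = assms(1-4) and \<alpha> = less_imp_le[OF assms(5)] less_imp_le[OF assms(6)]
  fix T X1 X2 :: "'a \<Rightarrow> real" and S :: "real \<Rightarrow> real \<Rightarrow> real"
  assume X: "T \<in> borel_measurable A" "X1 \<in> borel_measurable A" "X2 \<in> borel_measurable A"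
    and expectile: "AE \<omega> in M. is_expectile \<alpha> (F \<omega>) (T \<omega>)"
    and between: "AE \<omega> in M. (X2 \<omega> \<le> X1 \<omega> \<and> X1 \<omega> \<le> T \<omega>) \<or> (T \<omega> \<le> X1 \<omega> \<and> X1 \<omega> \<le> X2 \<omega>)"
    and "scoresE \<alpha> S"
  then obtain \<phi> where \<phi>: "convex_on UNIV \<phi>" and S: "S = expectile_score \<alpha> \<phi>"
    by (elim scoresEE)
  have "AE \<omega> in M. (\<integral>\<^sup>+y. S (X1 \<omega>) y \<partial>cdf_measure (F \<omega>)) \<le> (\<integral>\<^sup>+y. S (X2 \<omega>) y \<partial>cdf_measure (F \<omega>))"
    using expectile between AE_space[of M] by eventually_elim
      (simp add: S nn_integral_expectile_score_mono[OF ideal_forecast_CDF[OF setting] \<alpha> _ \<phi>])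
  then show "(\<integral>\<^sup>+\<omega>. ennreal (S (X1 \<omega>) (Y \<omega>)) \<partial>M) \<le> (\<integral>\<^sup>+\<omega>. ennreal (S (X2 \<omega>) (Y \<omega>)) \<partial>M)"
    using borel_measurable_expectile_score[OF \<phi>]
    by (intro nn_integral_score_mono_ideal_forecast[OF setting X(2,3)]) (simp_all add: S)
qed

end
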